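(* Let $g:\mathbb{R}^n\to\mathbb{R}\cup\{+\infty\}$ be a proper closed convex function and let $f=f_1-f_2$, where $f_1,f_2:\mathbb{R}^n\to\mathbb{R}$ are convex differentiable functions such that $\nabla f_1$ is Lipschitz continuous with modulus $L>0$, $\nabla f_2$ is Lipschitz continuous with modulus $l\ge 0$, and $L\ge l$. Let $F=f+g$, and assume $\inf F>-\infty$ and that this infimum is attained. Let $\{x^k\}$ be generated by Algorithm 1 (described in the context) with $\{\beta_k\}\subseteq\big[0,\sqrt{L/(L+l)}\,\big]$, let $\bar\beta=\sup_k\beta_k$, and let $\alpha\in\big[\tfrac{L+l}{2}\bar\beta^2,\tfrac{L}{2}\big]$. Then: (i) for every $z\in\operatorname{dom} g$ and every $k\ge 0$, $$F(x^{k+1})\le F(z)+\frac{L+l}{2}\|z-y^k\|^2-\frac{L}{2}\|x^{k+1}-z\|^2;$$ (ii) for all $k\ge0$, $$H_{k+1,\alpha}-H_{k,\alpha}\le\Big(-\frac L2+\alpha\Big)\|x^{k+1}-x^k\|^2+\Big(\frac{L+l}{2}\beta_k^2-\alpha\Big)\|x^k-x^{k-1}\|^2;$$ (iii) the sequence $\{H_{k,\alpha}\}$ is nonincreasing.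
   Context: For a proper closed convex $h$, $\mathrm{Prox}_h(v)=\arg\min_{x\in\mathbb{R}^n}\{h(x)+\tfrac12\|x-v\|^2\}$. Algorithm 1 (proximal gradient algorithm with extrapolation): choose $x^0\in\operatorname{dom} g$ and $\{\beta_k\}\subseteq[0,\sqrt{L/(L+l)}]$, set $x^{-1}=x^0$, and for $k=0,1,2,\dots$ set $y^k=x^k+\beta_k(x^k-x^{k-1})$ and $x^{k+1}=\mathrm{Prox}_{\frac1L g}\big(y^k-\tfrac1L\nabla f(y^k)\big)$. For $\alpha\ge0$, $H_{k,\alpha}:=F(x^k)+\alpha\|x^k-x^{k-1}\|^2$. *)

theory Defs
  imports "HOL-Analysis.Analysis"
begin

text \<open>Extended-real-valued functions h :: 'a => ereal model R^n -> R \<union> {+\<infinity>}.\<close>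

definition edom :: "('a \<Rightarrow> ereal) \<Rightarrow> 'a set" where
  "edom h = {x. h x < \<infinity>}"

definition proper_fun :: "('a \<Rightarrow> ereal) \<Rightarrow> bool" where
  "proper_fun h \<longleftrightarrow> (\<forall>x. h x \<noteq> -\<infinity>) \<and> (\<exists>x. h x < \<infinity>)"

definition closed_fun :: "('a::topological_space \<Rightarrow> ereal) \<Rightarrow> bool" where
  "closed_fun h \<longleftrightarrow> closed {(x, t::real). h x \<le> ereal t}"

definition convex_efun :: "('a::real_vector \<Rightarrow> ereal) \<Rightarrow> bool" where
  "convex_efun h \<longleftrightarrow> convex (edom h) \<and> convex_on (edom h) (\<lambda>x. real_of_ereal (h x))"

definition is_prox :: "('a::real_normed_vector \<Rightarrow> ereal) \<Rightarrow> 'a \<Rightarrow> 'a \<Rightarrow> bool" where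
  "is_prox h v p \<longleftrightarrow>
     (\<forall>x. h p + ereal ((1/2) * (norm (p - v))\<^sup>2) \<le> h x + ereal ((1/2) * (norm (x - v))\<^sup>2))"

end

theory Submission
  imports Defs
begin

text \<open>
  Let \<open>p\<close> be the new iterate and \<open>y\<close> the extrapolated point. The descent lemma bounds
  \<open>f\<^sub>1 p\<close> and \<open>f\<^sub>2 z\<close> from above by their quadratic models at \<open>y\<close> (with moduli \<open>L\<close> and \<open>l\<close>),
  while convexity bounds \<open>f\<^sub>1 z\<close> and \<open>f\<^sub>2 p\<close> from below by their tangents at \<open>y\<close>. The
  remaining linear terms are exactly those in the optimality condition of the proximal step,
  which for convex \<open>g\<close> reads \<open>g p + L \<langle>v - p, z - p\<rangle> \<le> g z\<close> with \<open>v\<close> the gradient point;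
  completing the square gives (i). Taking \<open>z\<close> to be the previous iterate and using
  \<open>\<parallel>x\<^sub>k - y\<^sub>k\<parallel> = \<beta>\<^sub>k \<parallel>x\<^sub>k - x\<^sub>k\<^sub>-\<^sub>1\<parallel>\<close> gives (ii); the choice of \<open>\<alpha>\<close> makes both coefficients
  nonpositive, hence (iii).
\<close>

lemma has_real_derivative_along_line:
  fixes h :: "'a::euclidean_space \<Rightarrow> real"
  assumes "\<And>u. (h has_derivative (\<lambda>d. grad u \<bullet> d)) (at u)"
  shows "((\<lambda>t. h (y + t *\<^sub>R d)) has_real_derivative (grad (y + t *\<^sub>R d) \<bullet> d)) (at t within S)"
proof -
  have "((\<lambda>t. y + t *\<^sub>R d) has_derivative (\<lambda>s. s *\<^sub>R d)) (at t within S)"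
    by (auto intro!: derivative_eq_intros)
  from has_derivative_compose[OF this assms]
  show ?thesis
    by (simp add: has_field_derivative_def mult.commute[of _ "grad (y + t *\<^sub>R d) \<bullet> d"])
qed

lemma lipschitz_gradient_upper_bound:
  fixes h :: "'a::euclidean_space \<Rightarrow> real"
  assumes deriv: "\<And>u. (h has_derivative (\<lambda>d. grad u \<bullet> d)) (at u)"
    and lip: "\<And>u v. norm (grad u - grad v) \<le> M * norm (u - v)"
  shows "h x \<le> h y + grad y \<bullet> (x - y) + M / 2 * (norm (x - y))\<^sup>2"
proof -
  define d where "d = x - y"
  have slope_bound: "(grad (y + t *\<^sub>R d) - grad y) \<bullet> d \<le> M * t * (norm d)\<^sup>2" if "0 \<le> t" for t
  proof -
    have "(grad (y + t *\<^sub>R d) - grad y) \<bullet> d \<le> norm (grad (y + t *\<^sub>R d) - grad y) * norm d"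
      by (rule norm_cauchy_schwarz)
    also have "\<dots> \<le> M * norm (t *\<^sub>R d) * norm d"
      using lip[of "y + t *\<^sub>R d" y] by (simp add: mult_right_mono)
    also have "\<dots> = M * t * (norm d)\<^sup>2"
      using that by (simp add: power2_eq_square)
    finally show ?thesis .
  qed
  define \<phi> where "\<phi> t = h (y + t *\<^sub>R d) - t * (grad y \<bullet> d) - M / 2 * t\<^sup>2 * (norm d)\<^sup>2" for t
  have "\<phi> 1 \<le> \<phi> 0"
  proof (rule DERIV_nonpos_imp_nonincreasing[of 0 1 \<phi>])
    fix t :: real
    assume "0 \<le> t" "t \<le> 1"
    show "\<exists>D. DERIV \<phi> t :> D \<and> D \<le> 0"
      unfolding \<phi>_def
      apply (rule exI, rule conjI)
       apply (rule derivative_eq_intros has_real_derivative_along_line[OF deriv] | simp)+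
      using slope_bound[OF \<open>0 \<le> t\<close>] by (simp add: inner_diff_left mult_ac)
  qed simp
  then show ?thesis
    by (simp add: \<phi>_def d_def)
qed

lemma convex_on_gradient_lower_bound:
  fixes h :: "'a::euclidean_space \<Rightarrow> real"
  assumes deriv: "\<And>u. (h has_derivative (\<lambda>d. grad u \<bullet> d)) (at u)"
    and convex: "convex_on UNIV h"
  shows "h y + grad y \<bullet> (x - y) \<le> h x"
proof -
  define d where "d = x - y"
  have "convex_on UNIV (\<lambda>t::real. h (y + t *\<^sub>R d))"
  proof (rule convex_onI)
    fix t a b :: real
    assume "0 < t" "t < 1"
    have "y + ((1 - t) * a + t * b) *\<^sub>R d = (1 - t) *\<^sub>R (y + a *\<^sub>R d) + t *\<^sub>R (y + b *\<^sub>R d)"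
      by (simp add: algebra_simps)
    with convex_onD[OF convex, of t "y + a *\<^sub>R d" "y + b *\<^sub>R d"] \<open>0 < t\<close> \<open>t < 1\<close>
    show "h (y + ((1 - t) *\<^sub>R a + t *\<^sub>R b) *\<^sub>R d) \<le> (1 - t) * h (y + a *\<^sub>R d) + t * h (y + b *\<^sub>R d)"
      by simp
  qed simp
  then have "grad (y + 0 *\<^sub>R d) \<bullet> d * (1 - 0) \<le> h (y + 1 *\<^sub>R d) - h (y + 0 *\<^sub>R d)"
    by (rule convex_on_imp_above_tangent)
       (auto intro: has_real_derivative_along_line[OF deriv, of _ _ 0, simplified])
  then show ?thesis
    by (simp add: d_def)
qed

lemma norm_add_square:
  fixes a b :: "'a::real_inner"
  shows "(norm (a + b))\<^sup>2 = (norm a)\<^sup>2 + 2 * (a \<bullet> b) + (norm b)\<^sup>2"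
  by (simp add: power2_norm_eq_inner inner_add_left inner_add_right inner_commute)

lemma nonneg_if_nonneg_near_zero:
  fixes a b :: real
  assumes "\<And>t. 0 < t \<Longrightarrow> t < 1 \<Longrightarrow> 0 \<le> a + t * b"
  shows "0 \<le> a"
proof -
  have "((\<lambda>t. a + t * b) \<longlongrightarrow> a) (at_right 0)"
    by (auto intro!: tendsto_eq_intros)
  moreover have "eventually (\<lambda>t. 0 \<le> a + t * b) (at_right 0)"
    using assms by (auto intro: eventually_mono[OF eventually_at_right_real[of 0 1]])
  ultimately show ?thesis
    by (rule tendsto_lowerbound) simp_all
qed

lemma prox_variational_ineq:
  fixes h :: "'a::real_inner \<Rightarrow> real"
  assumes "convex D" and "convex_on D h" and "p \<in> D" and "z \<in> D"
    and opt: "\<And>u. u \<in> D \<Longrightarrow> h p + (1/2) * (norm (p - v))\<^sup>2 \<le> h u + (1/2) * (norm (u - v))\<^sup>2"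
  shows "h p + (v - p) \<bullet> (z - p) \<le> h z"
proof -
  have "0 \<le> (h z - h p - (v - p) \<bullet> (z - p)) + t * ((norm (z - p))\<^sup>2 / 2)"
    if t: "0 < t" "t < 1" for t
  proof -
    define u where "u = p + t *\<^sub>R (z - p)"
    have "u = (1 - t) *\<^sub>R p + t *\<^sub>R z"
      by (simp add: u_def algebra_simps)
    with assms(1-4) t have "u \<in> D" and "h u \<le> (1 - t) * h p + t * h z"
      by (auto simp: convex_alt intro!: convex_onD)
    moreover have "(norm (u - v))\<^sup>2 = (norm (p - v))\<^sup>2 - 2 * t * ((v - p) \<bullet> (z - p)) + t\<^sup>2 * (norm (z - p))\<^sup>2"
    proof -
      have "(norm (u - v))\<^sup>2 = (norm ((p - v) + t *\<^sub>R (z - p)))\<^sup>2"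
        by (simp add: u_def algebra_simps)
      also have "\<dots> = (norm (p - v))\<^sup>2 + 2 * ((p - v) \<bullet> (t *\<^sub>R (z - p))) + (norm (t *\<^sub>R (z - p)))\<^sup>2"
        by (rule norm_add_square)
      also have "\<dots> = (norm (p - v))\<^sup>2 - 2 * t * ((v - p) \<bullet> (z - p)) + t\<^sup>2 * (norm (z - p))\<^sup>2"
        by (simp add: inner_diff_left power_mult_distrib right_diff_distrib)
      finally show ?thesis .
    qed
    ultimately have "0 \<le> t * ((h z - h p - (v - p) \<bullet> (z - p)) + t * ((norm (z - p))\<^sup>2 / 2))"
      using opt[of u] by (simp add: algebra_simps power2_eq_square)
    with t show ?thesis
      by (simp add: zero_le_mult_iff)
  qed
  then have "0 \<le> h z - h p - (v - p) \<bullet> (z - p)"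
    by (rule nonneg_if_nonneg_near_zero)
  then show ?thesis
    by simp
qed

lemma prox_grad_dc_step_bound:
  fixes f1 f2 G :: "'a::euclidean_space \<Rightarrow> real"
  assumes "convex D" and "convex_on D G" and "p \<in> D" and "z \<in> D" and "L > 0"
    and f1_convex: "convex_on UNIV f1" and f2_convex: "convex_on UNIV f2"
    and f1_grad: "\<And>u. (f1 has_derivative (\<lambda>h. grad1 u \<bullet> h)) (at u)"
    and f2_grad: "\<And>u. (f2 has_derivative (\<lambda>h. grad2 u \<bullet> h)) (at u)"
    and grad1_lip: "\<And>u v. norm (grad1 u - grad1 v) \<le> L * norm (u - v)"
    and grad2_lip: "\<And>u v. norm (grad2 u - grad2 v) \<le> l * norm (u - v)"
    and opt: "\<And>u. u \<in> D \<Longrightarrow>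
      (1/L) * G p + (1/2) * (norm (p - (y - (1/L) *\<^sub>R (grad1 y - grad2 y))))\<^sup>2
        \<le> (1/L) * G u + (1/2) * (norm (u - (y - (1/L) *\<^sub>R (grad1 y - grad2 y))))\<^sup>2"
  shows "f1 p - f2 p + G p
    \<le> f1 z - f2 z + G z + ((L + l) / 2 * (norm (z - y))\<^sup>2 - L / 2 * (norm (p - z))\<^sup>2)"
proof -
  define v where "v = y - (1/L) *\<^sub>R (grad1 y - grad2 y)"
  have "(1/L) * G p + (v - p) \<bullet> (z - p) \<le> (1/L) * G z"
    using assms(1-5) opt unfolding v_def by (intro prox_variational_ineq) auto
  then have "L * ((1/L) * G p + (v - p) \<bullet> (z - p)) \<le> L * ((1/L) * G z)"
    using \<open>L > 0\<close> by (intro mult_left_mono) auto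
  moreover have "L * ((v - p) \<bullet> (z - p)) = - (L * ((p - y) \<bullet> (z - p))) - (grad1 y - grad2 y) \<bullet> (z - p)"
    using \<open>L > 0\<close> by (simp add: v_def inner_diff_left algebra_simps)
  ultimately have prox: "G p - L * ((p - y) \<bullet> (z - p)) - (grad1 y \<bullet> (z - p) - grad2 y \<bullet> (z - p)) \<le> G z"
    using \<open>L > 0\<close> by (simp add: distrib_left inner_diff_left)
  have "f1 p \<le> f1 y + grad1 y \<bullet> (p - y) + L / 2 * (norm (p - y))\<^sup>2"
    by (rule lipschitz_gradient_upper_bound[OF f1_grad grad1_lip])
  moreover have "f2 y + grad2 y \<bullet> (p - y) \<le> f2 p"
    by (rule convex_on_gradient_lower_bound[OF f2_grad f2_convex])
  moreover have "f1 y + grad1 y \<bullet> (z - y) \<le> f1 z"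
    by (rule convex_on_gradient_lower_bound[OF f1_grad f1_convex])
  moreover have "f2 z \<le> f2 y + grad2 y \<bullet> (z - y) + l / 2 * (norm (z - y))\<^sup>2"
    by (rule lipschitz_gradient_upper_bound[OF f2_grad grad2_lip])
  moreover have "grad1 y \<bullet> (z - y) = grad1 y \<bullet> (z - p) + grad1 y \<bullet> (p - y)"
    and "grad2 y \<bullet> (z - y) = grad2 y \<bullet> (z - p) + grad2 y \<bullet> (p - y)"
    by (simp_all add: inner_diff_right)
  moreover have "L / 2 * (norm (p - y))\<^sup>2 + L * ((p - y) \<bullet> (z - p))
      = L / 2 * (norm (z - y))\<^sup>2 - L / 2 * (norm (z - p))\<^sup>2"
  proof -
    have expand: "(norm (z - y))\<^sup>2 = (norm (p - y))\<^sup>2 + 2 * ((p - y) \<bullet> (z - p)) + (norm (z - p))\<^sup>2"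
      using norm_add_square[of "p - y" "z - p"] by simp
    show ?thesis
      unfolding expand by (simp add: algebra_simps)
  qed
  moreover have "(L + l) / 2 * (norm (z - y))\<^sup>2 = L / 2 * (norm (z - y))\<^sup>2 + l / 2 * (norm (z - y))\<^sup>2"
    by (simp add: algebra_simps)
  ultimately show ?thesis
    using prox unfolding norm_minus_commute[of p z] by linarith
qed

lemma proper_fun_finite_on_edom:
  assumes "proper_fun g" and "u \<in> edom g"
  shows "g u = ereal (real_of_ereal (g u))"
  using assms by (cases "g u") (auto simp: proper_fun_def edom_def)

lemma is_prox_scaled_mem_edom:
  assumes "proper_fun g" and "c > 0" and "is_prox (\<lambda>u. ereal c * g u) v p"
  shows "p \<in> edom g"
proof (rule ccontr)
  assume "p \<notin> edom g"
  then have "g p = \<infinity>"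
    by (simp add: edom_def)
  obtain u where "g u < \<infinity>" and "g u \<noteq> -\<infinity>"
    using \<open>proper_fun g\<close> by (auto simp: proper_fun_def)
  with \<open>g p = \<infinity>\<close> \<open>c > 0\<close> assms(3) show False
    unfolding is_prox_def by (cases "g u") (auto dest: spec[of _ u])
qed

lemma is_prox_scaled_real:
  assumes "proper_fun g" and "c > 0" and "is_prox (\<lambda>u. ereal c * g u) v p" and "u \<in> edom g"
  shows "c * real_of_ereal (g p) + (1/2) * (norm (p - v))\<^sup>2
    \<le> c * real_of_ereal (g u) + (1/2) * (norm (u - v))\<^sup>2"
proof -
  have "ereal c * g p + ereal ((1/2) * (norm (p - v))\<^sup>2) \<le> ereal c * g u + ereal ((1/2) * (norm (u - v))\<^sup>2)"
    using assms(3) by (simp add: is_prox_def)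
  moreover have "p \<in> edom g"
    using assms(1-3) by (rule is_prox_scaled_mem_edom)
  ultimately show ?thesis
    using proper_fun_finite_on_edom[OF assms(1)] \<open>u \<in> edom g\<close>
    by (metis ereal_less_eq(3) plus_ereal.simps(1) times_ereal.simps(1))
qed

theorem lemma3p1:
  fixes g :: "'a::euclidean_space \<Rightarrow> ereal"
    and f1 f2 :: "'a \<Rightarrow> real"
    and grad1 grad2 :: "'a \<Rightarrow> 'a"
    and L l alpha :: real
    and beta :: "nat \<Rightarrow> real"
    and x :: "nat \<Rightarrow> 'a"
  assumes g_proper: "proper_fun g"
    and g_closed: "closed_fun g"
    and g_convex: "convex_efun g"
    and f1_convex: "convex_on UNIV f1"
    and f2_convex: "convex_on UNIV f2"
    and f1_grad: "\<And>u. (f1 has_derivative (\<lambda>h. grad1 u \<bullet> h)) (at u)"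
    and f2_grad: "\<And>u. (f2 has_derivative (\<lambda>h. grad2 u \<bullet> h)) (at u)"
    and L_pos: "L > 0"
    and l_nonneg: "l \<ge> 0"
    and L_ge_l: "L \<ge> l"
    and grad1_lip: "\<And>u v. norm (grad1 u - grad1 v) \<le> L * norm (u - v)"
    and grad2_lip: "\<And>u v. norm (grad2 u - grad2 v) \<le> l * norm (u - v)"
    and inf_finite: "(INF u. ereal (f1 u - f2 u) + g u) > -\<infinity>"
    and inf_attained: "\<exists>u0. ereal (f1 u0 - f2 u0) + g u0 = (INF u. ereal (f1 u - f2 u) + g u)"
    and x0_dom: "x 0 \<in> edom g"
    and beta_range: "\<And>k. 0 \<le> beta k \<and> beta k \<le> sqrt (L / (L + l))"
    and alg: "\<And>k. is_prox (\<lambda>u. ereal (1 / L) * g u)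
                (x k + beta k *\<^sub>R (x k - x (k - 1))
                  - (1 / L) *\<^sub>R (grad1 (x k + beta k *\<^sub>R (x k - x (k - 1)))
                                 - grad2 (x k + beta k *\<^sub>R (x k - x (k - 1)))))
                (x (Suc k))"
    and alpha_lo: "(L + l) / 2 * (Sup (range beta))\<^sup>2 \<le> alpha"
    and alpha_hi: "alpha \<le> L / 2"
  shows
    "(\<forall>z\<in>edom g. \<forall>k.
        ereal (f1 (x (Suc k)) - f2 (x (Suc k))) + g (x (Suc k))
          \<le> ereal (f1 z - f2 z) + g z
             + ereal ((L + l) / 2 * (norm (z - (x k + beta k *\<^sub>R (x k - x (k - 1)))))\<^sup>2
                      - L / 2 * (norm (x (Suc k) - z))\<^sup>2))
     \<and> (\<forall>k.
        (ereal (f1 (x (Suc k)) - f2 (x (Suc k))) + g (x (Suc k))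
            + ereal (alpha * (norm (x (Suc k) - x k))\<^sup>2))
        - (ereal (f1 (x k) - f2 (x k)) + g (x k)
            + ereal (alpha * (norm (x k - x (k - 1)))\<^sup>2))
        \<le> ereal ((- L / 2 + alpha) * (norm (x (Suc k) - x k))\<^sup>2
                 + ((L + l) / 2 * (beta k)\<^sup>2 - alpha) * (norm (x k - x (k - 1)))\<^sup>2))
     \<and> decseq (\<lambda>k. ereal (f1 (x k) - f2 (x k)) + g (x k)
                    + ereal (alpha * (norm (x k - x (k - 1)))\<^sup>2))"
proof -
  define y where "y k = x k + beta k *\<^sub>R (x k - x (k - 1))" for k
  define G where "G u = real_of_ereal (g u)" for u
  define F where "F u = f1 u - f2 u + G u" for u
  have g_real: "g u = ereal (G u)" if "u \<in> edom g" for u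
    using proper_fun_finite_on_edom[OF g_proper that] by (simp add: G_def)
  have prox: "is_prox (\<lambda>u. ereal (1 / L) * g u) (y k - (1 / L) *\<^sub>R (grad1 (y k) - grad2 (y k))) (x (Suc k))"
    for k
    using alg by (simp add: y_def)
  have x_dom: "x k \<in> edom g" for k
    using x0_dom is_prox_scaled_mem_edom[OF g_proper _ prox] L_pos by (cases k) auto
  have step: "F (x (Suc k)) \<le> F z + ((L + l) / 2 * (norm (z - y k))\<^sup>2 - L / 2 * (norm (x (Suc k) - z))\<^sup>2)"
    if "z \<in> edom g" for z k
    unfolding F_def
    using g_convex x_dom that L_pos f1_convex f2_convex f1_grad f2_grad grad1_lip grad2_lip
      is_prox_scaled_real[OF g_proper _ prox]
    by (intro prox_grad_dc_step_bound[where D = "edom g"]) (auto simp: convex_efun_def G_def)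
  have potential_step: "F (x (Suc k)) + alpha * (norm (x (Suc k) - x k))\<^sup>2
      - (F (x k) + alpha * (norm (x k - x (k - 1)))\<^sup>2)
      \<le> (- L / 2 + alpha) * (norm (x (Suc k) - x k))\<^sup>2
        + ((L + l) / 2 * (beta k)\<^sup>2 - alpha) * (norm (x k - x (k - 1)))\<^sup>2" for k
  proof -
    have "norm (x k - y k) = beta k * norm (x k - x (k - 1))"
      using beta_range[of k] by (simp add: y_def)
    with step[OF x_dom, of k k] show ?thesis
      by (simp add: power_mult_distrib algebra_simps)
  qed
  have potential_decrease: "F (x (Suc k)) + alpha * (norm (x (Suc k) - x k))\<^sup>2
      \<le> F (x k) + alpha * (norm (x k - x (k - 1)))\<^sup>2" for k
  proof -
    have "bdd_above (range beta)"
      using beta_range by (intro bdd_aboveI[of _ "sqrt (L / (L + l))"]) auto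
    then have "(L + l) / 2 * (beta k)\<^sup>2 \<le> (L + l) / 2 * (Sup (range beta))\<^sup>2"
      using beta_range[of k] L_pos l_nonneg by (auto intro!: mult_left_mono power_mono cSup_upper)
    then have "- L / 2 + alpha \<le> 0" "(L + l) / 2 * (beta k)\<^sup>2 - alpha \<le> 0"
      using alpha_lo alpha_hi by linarith+
    with potential_step[of k] show ?thesis
      by (smt (verit) mult_nonpos_nonneg zero_le_power2)
  qed
  show ?thesis
    using step potential_step potential_decrease
    by (auto simp: F_def g_real x_dom y_def intro!: decseq_SucI)
qed

end
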